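(* Let $m\in A_n$ be a monomial with $\mathrm{mdeg}(m)=(\alpha,\beta)$. Then: (i) $g_+(m)$ and $g_-(m)$ commute if and only if $\alpha=\beta$; (ii) if $g_+(m)$ and $g_-(m)$ do not commute, then $\deg([g_+(m),g_-(m)])=\deg(g_+(m))+\deg(g_-(m))-2=:d$; (iii) in that case $$\deg\Big([g_+(m),g_-(m)]+2i\sum_{k=1}^n(\alpha_k^2-\beta_k^2)\,a^{(\alpha+\beta-e_k,\;\alpha+\beta-e_k)}\Big)<d,$$ where the summands with $\alpha_k+\beta_k=0$ vanish.
   Context: Fix $n\ge 1$. The Weyl algebra $A_n$ is the unital associative $\mathbb{C}$-algebra generated by $a_1,\dots,a_n,a_1^\dagger,\dots,a_n^\dagger$ subject to $[a_i,a_j^\dagger]=\delta_{ij}$ and $[a_i,a_j]=[a_i^\dagger,a_j^\dagger]=0$. For $\gamma=(\alpha,\beta)\in\mathbb N_0^{2n}$ set $a^{\gamma}=(a_1^\dagger)^{\alpha_1}\cdots(a_n^\dagger)^{\alpha_n}a_1^{\beta_1}\cdots a_n^{\beta_n}$; these form a $\mathbb C$-basis of $A_n$; $|\gamma|=\sum_j\alpha_j+\sum_j\beta_j$. For $0\neq g\in A_n$, $\deg(g)$ is the largest $|\gamma|$ such that $a^\gamma$ has nonzero coefficient in the expansion of $g$; $\deg(0)=-\infty$. A monomial is a finite product (in any order) of the generators $a_j,a_j^\dagger$; its multi-degree $\mathrm{mdeg}(m)=(\alpha,\beta)$ records the number $\alpha_j$ of factors $a_j^\dagger$ and $\beta_j$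 of factors $a_j$. The adjoint $\dagger$ is the conjugate-linear anti-automorphism with $(a_j)^\dagger=a_j^\dagger$, $(a_j^\dagger)^\dagger=a_j$, $1^\dagger=1$. $g_+(m)=i(m^\dagger+m)$, $g_-(m)=m^\dagger-m$. $e_k\in\mathbb N_0^n$ denotes the $k$-th unit vector. *)

theory Defs
  imports Complex_Main "HOL-Library.Function_Algebras" "HOL-Library.Extended_Real"
begin

text \<open>The Weyl algebra A_n is modelled by its normal-ordered basis: an element is a
  function from multi-indices (alpha, beta) to coefficients (finitely supported,
  alpha j = beta j = 0 for j >= n); the function value at (alpha,beta) is the
  coefficient of the basis element (a^dagger)^alpha a^beta.  Modes are indexed
  0..n-1 (paper: 1..n).\<close>

type_synonym midx = "(nat \<Rightarrow> nat) \<times> (nat \<Rightarrow> nat)"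
type_synonym weyl = "midx \<Rightarrow> complex"

datatype gen = Cre nat | Ann nat

fun gidx :: "gen \<Rightarrow> nat" where
  "gidx (Cre j) = j" | "gidx (Ann j) = j"

fun gdag :: "gen \<Rightarrow> gen" where
  "gdag (Cre j) = Ann j" | "gdag (Ann j) = Cre j"

definition basis :: "midx \<Rightarrow> weyl" where
  "basis \<gamma> = (\<lambda>\<delta>. if \<delta> = \<gamma> then 1 else 0)"

text \<open>Left multiplication by a generator, derived from the defining relations:
  a_j^dagger a^(alpha,beta) = a^(alpha+e_j,beta),
  a_j a^(alpha,beta) = a^(alpha,beta+e_j) + alpha_j a^(alpha-e_j,beta).\<close>
fun lmul :: "gen \<Rightarrow> weyl \<Rightarrow> weyl" where
  "lmul (Cre j) g = (\<lambda>(\<alpha>, \<beta>). if \<alpha> j > 0 then g (\<alpha>(j := \<alpha> j - 1), \<beta>) else 0)"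
| "lmul (Ann j) g = (\<lambda>(\<alpha>, \<beta>).
      (if \<beta> j > 0 then g (\<alpha>, \<beta>(j := \<beta> j - 1)) else 0)
      + of_nat (\<alpha> j + 1) * g (\<alpha>(j := \<alpha> j + 1), \<beta>))"

fun act :: "gen list \<Rightarrow> weyl \<Rightarrow> weyl" where
  "act [] g = g"
| "act (x # xs) g = lmul x (act xs g)"

definition mon :: "gen list \<Rightarrow> weyl" where
  "mon w = act w (basis (\<lambda>_. 0, \<lambda>_. 0))"

definition word :: "nat \<Rightarrow> midx \<Rightarrow> gen list" where
  "word n \<gamma> = concat (map (\<lambda>j. replicate (fst \<gamma> j) (Cre j)) [0..<n])
             @ concat (map (\<lambda>j. replicate (snd \<gamma> j) (Ann j)) [0..<n])"

definition wmul :: "nat \<Rightarrow> weyl \<Rightarrow> weyl \<Rightarrow> weyl" where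
  "wmul n f g = (\<Sum>\<gamma>\<in>{\<gamma>. f \<gamma> \<noteq> 0}. (\<lambda>\<delta>. f \<gamma> * act (word n \<gamma>) g \<delta>))"

definition comm :: "nat \<Rightarrow> weyl \<Rightarrow> weyl \<Rightarrow> weyl" where
  "comm n f g = wmul n f g - wmul n g f"

definition mlen :: "nat \<Rightarrow> midx \<Rightarrow> nat" where
  "mlen n \<gamma> = (\<Sum>j<n. fst \<gamma> j) + (\<Sum>j<n. snd \<gamma> j)"

definition wdeg :: "nat \<Rightarrow> weyl \<Rightarrow> ereal" where
  "wdeg n g = (if g = 0 then -\<infinity> else ereal (real (Max {mlen n \<gamma> | \<gamma>. g \<gamma> \<noteq> 0})))"

definition mdeg :: "gen list \<Rightarrow> midx" where
  "mdeg w = (\<lambda>j. count_list w (Cre j), \<lambda>j. count_list w (Ann j))"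

definition mon_adj :: "gen list \<Rightarrow> weyl" where
  "mon_adj w = mon (rev (map gdag w))"

definition g_plus :: "gen list \<Rightarrow> weyl" where
  "g_plus w = (\<lambda>\<gamma>. \<i> * (mon_adj w \<gamma> + mon w \<gamma>))"

definition g_minus :: "gen list \<Rightarrow> weyl" where
  "g_minus w = (\<lambda>\<gamma>. mon_adj w \<gamma> - mon w \<gamma>)"

end

theory Submission
  imports Defs
begin

text \<open>With \<open>w'\<close> the reversed word of adjoint letters, \<open>g\<^sub>+\<close> and \<open>g\<^sub>-\<close> are combinations of \<open>w\<close> and
  \<open>w'\<close>, and their commutator is \<open>2i [w, w']\<close>.  Moving the letters of \<open>w'\<close> past those of \<open>w\<close>
  produces one contraction per pair \<open>a_k\<close>, \<open>a_k\<^sup>\<dagger>\<close>; the remaining monomial has degree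
  \<open>2|w| - 2\<close> and leading term at \<open>(\<alpha>+\<beta>-e_k, \<alpha>+\<beta>-e_k)\<close>, while its lower terms have degree at
  most \<open>2|w| - 4\<close>.  Counting contractions gives the leading part
  \<open>\<Sum>\<^sub>k (\<beta>\<^sub>k\<^sup>2 - \<alpha>\<^sub>k\<^sup>2) a^(\<alpha>+\<beta>-e_k, \<alpha>+\<beta>-e_k)\<close>, which is nonzero exactly when \<open>\<alpha> \<noteq> \<beta>\<close>.
  When \<open>\<alpha> = \<beta>\<close>, both words are charge-free; such monomials act diagonally in the Fock
  representation on the entries \<open>(\<rho>, 0)\<close>, and that representation is faithful, so they commute.\<close>

definition wsmult :: "complex \<Rightarrow> weyl \<Rightarrow> weyl" where
  "wsmult c f = (\<lambda>\<gamma>. c * f \<gamma>)"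

lemma wsmult_apply [simp]: "wsmult c f \<gamma> = c * f \<gamma>"
  by (simp add: wsmult_def)

lemma wsmult_0 [simp]: "wsmult 0 f = 0"
  by (simp add: wsmult_def fun_eq_iff)

lemma sum_fun_apply: "(\<Sum>i\<in>I. F i) x = (\<Sum>i\<in>I. F i x)"
  by (induction I rule: infinite_finite_induct) auto

lemma basis_apply: "basis \<delta> \<gamma> = (if \<gamma> = \<delta> then 1 else 0)"
  by (simp add: basis_def)

section \<open>Left multiplication and commuting words\<close>

lemma lmul_add: "lmul x (f + g) = lmul x f + lmul x g"
  by (cases x) (auto simp: fun_eq_iff algebra_simps)

lemma lmul_diff: "lmul x (f - g) = lmul x f - lmul x g"
  by (cases x) (auto simp: fun_eq_iff algebra_simps)

lemma lmul_wsmult: "lmul x (wsmult c f) = wsmult c (lmul x f)"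
  by (cases x) (auto simp: fun_eq_iff algebra_simps)

lemma lmul_zero: "lmul x 0 = 0"
  by (cases x) (auto simp: fun_eq_iff)

lemma lmul_sum: "lmul x (\<Sum>i\<in>I. F i) = (\<Sum>i\<in>I. lmul x (F i))"
  using sum_comp_morphism[of "lmul x" F I] by (simp add: lmul_zero lmul_add comp_def)

lemma act_add: "act u (f + g) = act u f + act u g"
  by (induction u) (simp_all only: act.simps lmul_add)

lemma act_wsmult: "act u (wsmult c f) = wsmult c (act u f)"
  by (induction u) (simp_all only: act.simps lmul_wsmult)

lemma act_zero: "act u 0 = 0"
  by (induction u) (simp_all only: act.simps lmul_zero)

lemma act_sum: "act u (\<Sum>i\<in>I. F i) = (\<Sum>i\<in>I. act u (F i))"
  using sum_comp_morphism[of "act u" F I] by (simp add: act_zero act_add comp_def)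

lemma act_append: "act (u @ v) g = act u (act v g)"
  by (induction u) auto

lemma mon_Cons: "mon (x # u) = lmul x (mon u)"
  by (simp add: mon_def)

lemma mon_append: "mon (u @ v) = act u (mon v)"
  by (simp add: mon_def act_append)

fun ccr :: "gen \<Rightarrow> gen \<Rightarrow> complex" where
  "ccr (Ann j) (Cre k) = (if j = k then 1 else 0)"
| "ccr (Cre j) (Ann k) = (if j = k then -1 else 0)"
| "ccr _ _ = 0"

lemma lmul_lmul_swap: "lmul x (lmul y g) = lmul y (lmul x g) + wsmult (ccr x y) g"
  by (cases x; cases y; cases "gidx x = gidx y")
     (auto simp: fun_eq_iff fun_upd_twist algebra_simps)

lemma act_Cons_minus_act_snoc:
  "act (x # v) g - act (v @ [x]) g
   = (\<Sum>j<length v. wsmult (ccr x (v!j)) (act (take j v @ drop (Suc j) v) g))"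
proof (induction v)
  case Nil thus ?case by simp
next
  case (Cons y v)
  have "act (x # y # v) g - act ((y # v) @ [x]) g
      = lmul y (act (x # v) g - act (v @ [x]) g) + wsmult (ccr x y) (act v g)"
    using lmul_lmul_swap[of x y "act v g"] by (simp add: lmul_diff algebra_simps)
  also have "\<dots> = (\<Sum>j<length (y # v). wsmult (ccr x ((y # v)!j))
                    (act (take j (y # v) @ drop (Suc j) (y # v)) g))"
    unfolding Cons lmul_sum length_Cons sum.lessThan_Suc_shift
    by (simp add: lmul_wsmult add.commute)
  finally show ?case .
qed

lemma act_append_swap:
  "act (u @ v) g - act (v @ u) g
   = (\<Sum>i<length u. \<Sum>j<length v. wsmult (ccr (u!i) (v!j))
        (act (take i u @ take j v @ drop (Suc j) v @ drop (Suc i) u) g))"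
proof (induction u)
  case Nil thus ?case by simp
next
  case (Cons x u)
  have "act ((x # u) @ v) g - act (v @ x # u) g
     = lmul x (act (u @ v) g - act (v @ u) g) + (act (x # v) (act u g) - act (v @ [x]) (act u g))"
    by (simp add: act_append lmul_diff)
  also have "\<dots> = (\<Sum>i<length (x # u). \<Sum>j<length v. wsmult (ccr ((x # u)!i) (v!j))
        (act (take i (x # u) @ take j v @ drop (Suc j) v @ drop (Suc i) (x # u)) g))"
    unfolding Cons act_Cons_minus_act_snoc lmul_sum length_Cons sum.lessThan_Suc_shift
    by (simp add: lmul_wsmult act_append add.commute)
  finally show ?case .
qed

lemma lmul_nonzeroE:
  assumes "lmul x f (a, b) \<noteq> 0"
  obtains j where "x = Cre j" "a j > 0" "f (a(j := a j - 1), b) \<noteq> 0"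
    | j where "x = Ann j" "b j > 0" "f (a, b(j := b j - 1)) \<noteq> 0"
    | j where "x = Ann j" "f (a(j := a j + 1), b) \<noteq> 0"
proof (cases x)
  case (Ann j)
  with assms consider "b j > 0" "f (a, b(j := b j - 1)) \<noteq> 0" | "f (a(j := a j + 1), b) \<noteq> 0"
    by (cases "f (a(j := a j + 1), b) = 0") (auto split: if_splits)
  with Ann that show thesis by metis
qed (use assms that in \<open>auto split: if_splits\<close>)

section \<open>Multi-degree and normal-ordered expansion of monomials\<close>

definition idx_below :: "nat \<Rightarrow> midx \<Rightarrow> bool" where
  "idx_below n \<gamma> \<longleftrightarrow> (\<forall>j\<ge>n. fst \<gamma> j = 0 \<and> snd \<gamma> j = 0)"

definition gens_below :: "nat \<Rightarrow> gen list \<Rightarrow> bool" where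
  "gens_below n u \<longleftrightarrow> (\<forall>x\<in>set u. gidx x < n)"

lemma gens_below_append [simp]: "gens_below n (u @ v) \<longleftrightarrow> gens_below n u \<and> gens_below n v"
  by (auto simp: gens_below_def)

lemma sum_lessThan_fun_upd:
  "(\<Sum>i<(n::nat). (f(j := v)) i) + (if j < n then f j else 0) = (\<Sum>i<n. f i) + (if j < n then v else (0::nat))"
proof (cases "j < n")
  case True
  have "(\<Sum>i<n. (f(j := v)) i) = (f(j := v)) j + (\<Sum>i\<in>{..<n} - {j}. (f(j := v)) i)"
    using True by (intro sum.remove) auto
  also have "(\<Sum>i\<in>{..<n} - {j}. (f(j := v)) i) = (\<Sum>i\<in>{..<n} - {j}. f i)"
    by (intro sum.cong) auto
  moreover have "(\<Sum>i<n. f i) = f j + (\<Sum>i\<in>{..<n} - {j}. f i)"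
    using True by (intro sum.remove) auto
  ultimately show ?thesis using True by simp
qed (auto intro: sum.cong)

lemma mlen_upd_fst:
  "mlen n (a(j := v), b) + (if j < n then a j else 0) = mlen n (a, b) + (if j < n then v else 0)"
  unfolding mlen_def using sum_lessThan_fun_upd[where n=n and f=a and j=j and v=v] by simp

lemma mlen_upd_snd:
  "mlen n (a, b(j := v)) + (if j < n then b j else 0) = mlen n (a, b) + (if j < n then v else 0)"
  unfolding mlen_def using sum_lessThan_fun_upd[where n=n and f=b and j=j and v=v] by simp

lemma mdeg_Nil: "mdeg [] = (\<lambda>_. 0, \<lambda>_. 0)"
  by (simp add: mdeg_def)

lemma mdeg_Cons_Cre: "mdeg (Cre j # u) = ((fst (mdeg u))(j := Suc (fst (mdeg u) j)), snd (mdeg u))"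
  by (auto simp: mdeg_def fun_eq_iff)

lemma mdeg_Cons_Ann: "mdeg (Ann j # u) = (fst (mdeg u), (snd (mdeg u))(j := Suc (snd (mdeg u) j)))"
  by (auto simp: mdeg_def fun_eq_iff)

lemma mlen_mdeg: "gens_below n u \<Longrightarrow> mlen n (mdeg u) = length u"
proof (induction u)
  case Nil thus ?case by (simp add: mdeg_Nil mlen_def)
next
  case (Cons x u)
  hence IH: "mlen n (mdeg u) = length u" and xn: "gidx x < n" by (auto simp: gens_below_def)
  show ?case
  proof (cases x)
    case (Cre j)
    thus ?thesis using mlen_upd_fst[of n "fst (mdeg u)" j "Suc (fst (mdeg u) j)" "snd (mdeg u)"] IH xn
      by (simp add: mdeg_Cons_Cre)
  next
    case (Ann j)
    thus ?thesis using mlen_upd_snd[of n "fst (mdeg u)" "snd (mdeg u)" j "Suc (snd (mdeg u) j)"] IH xn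
      by (simp add: mdeg_Cons_Ann)
  qed
qed

lemma idx_below_mdeg: "gens_below n u \<Longrightarrow> idx_below n (mdeg u)"
  by (auto simp: gens_below_def idx_below_def mdeg_def count_list_0_iff)

lemma lmul_nonzero_mlen:
  assumes "lmul x f \<gamma> \<noteq> 0"
  shows "\<exists>\<delta>. f \<delta> \<noteq> 0 \<and> mlen n \<gamma> \<le> mlen n \<delta> + 1"
proof -
  obtain a b where \<gamma>: "\<gamma> = (a, b)" by (cases \<gamma>)
  from assms[unfolded \<gamma>] show ?thesis
  proof (cases rule: lmul_nonzeroE)
    case (1 j)
    thus ?thesis using mlen_upd_fst[of n a j "a j - 1" b] \<gamma> by (intro exI[of _ "(a(j := a j - 1), b)"]) (auto split: if_splits)
  next
    case (2 j)
    thus ?thesis using mlen_upd_snd[of n a b j "b j - 1"] \<gamma> by (intro exI[of _ "(a, b(j := b j - 1))"]) (auto split: if_splits)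
  next
    case (3 j)
    thus ?thesis using mlen_upd_fst[of n a j "a j + 1" b] \<gamma> by (intro exI[of _ "(a(j := a j + 1), b)"]) (auto split: if_splits)
  qed
qed

lemma act_nonzero_mlen:
  "act u f \<gamma> \<noteq> 0 \<Longrightarrow> \<exists>\<delta>. f \<delta> \<noteq> 0 \<and> mlen n \<gamma> \<le> mlen n \<delta> + length u"
proof (induction u arbitrary: \<gamma>)
  case (Cons x u)
  then obtain \<delta> where "act u f \<delta> \<noteq> 0" "mlen n \<gamma> \<le> mlen n \<delta> + 1"
    using lmul_nonzero_mlen[of x "act u f" \<gamma> n] by auto
  with Cons.IH[of \<delta>] show ?case by fastforce
qed auto

lemma lmul_nonzero_idx_below:
  assumes "lmul x f \<gamma> \<noteq> 0" "gidx x < n" "\<And>\<delta>. f \<delta> \<noteq> 0 \<Longrightarrow> idx_below n \<delta>"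
  shows "idx_below n \<gamma>"
proof -
  obtain a b where \<gamma>: "\<gamma> = (a, b)" by (cases \<gamma>)
  from assms(1)[unfolded \<gamma>] show ?thesis
    by (cases rule: lmul_nonzeroE)
       (use assms(2,3) \<gamma> in \<open>fastforce simp: idx_below_def split: if_splits\<close>)+
qed

lemma act_nonzero_idx_below:
  assumes "act u f \<gamma> \<noteq> 0" "gens_below n u" "\<And>\<delta>. f \<delta> \<noteq> 0 \<Longrightarrow> idx_below n \<delta>"
  shows "idx_below n \<gamma>"
  using assms(1,2)
proof (induction u arbitrary: \<gamma>)
  case (Cons x u)
  thus ?case using lmul_nonzero_idx_below[of x "act u f" \<gamma> n] by (auto simp: gens_below_def)
qed (use assms(3) in simp)

lemma mon_nonzero_idx_below: "gens_below n u \<Longrightarrow> mon u \<gamma> \<noteq> 0 \<Longrightarrow> idx_below n \<gamma>"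
  unfolding mon_def
  by (rule act_nonzero_idx_below) (auto simp: basis_apply idx_below_def split: if_splits)

lemma mon_nonzero_mlen: "mon u \<gamma> \<noteq> 0 \<Longrightarrow> mlen n \<gamma> \<le> length u"
  using act_nonzero_mlen[of u "basis (\<lambda>_. 0, \<lambda>_. 0)" \<gamma> n]
  by (auto simp: mon_def basis_apply mlen_def split: if_splits)

lemma mon_mdeg: "gens_below n u \<Longrightarrow> mon u (mdeg u) = 1"
proof (induction u)
  case Nil thus ?case by (simp add: mon_def mdeg_Nil basis_apply)
next
  case (Cons x u)
  hence IH: "mon u (mdeg u) = 1" and xn: "gidx x < n" and ok: "gens_below n u"
    by (auto simp: gens_below_def)
  obtain A B where AB: "mdeg u = (A, B)" by (cases "mdeg u")
  show ?case
  proof (cases x)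
    case (Cre j)
    thus ?thesis using IH by (simp add: mon_Cons mdeg_Cons_Cre AB)
  next
    case (Ann j)
    have "mlen n (A(j := Suc (A j)), B(j := Suc (B j))) = length u + 2"
      using mlen_upd_fst[of n A j "Suc (A j)" "B(j := Suc (B j))"] mlen_upd_snd[of n A B j "Suc (B j)"]
        mlen_mdeg[OF ok] xn Ann AB by simp
    hence "mon u (A(j := Suc (A j)), B(j := Suc (B j))) = 0"
      using mon_nonzero_mlen[of u _ n] by fastforce
    thus ?thesis using IH Ann by (simp add: mon_Cons mdeg_Cons_Ann AB)
  qed
qed

lemma mon_lower:
  assumes "gens_below n u" "\<gamma> \<noteq> mdeg u" "mon u \<gamma> \<noteq> 0"
  shows "mlen n \<gamma> + 2 \<le> length u"
  using assms
proof (induction u arbitrary: \<gamma>)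
  case Nil thus ?case by (simp add: mon_def mdeg_Nil basis_apply)
next
  case (Cons x u)
  hence ok: "gens_below n u" by (simp add: gens_below_def)
  obtain a b where \<gamma>: "\<gamma> = (a, b)" by (cases \<gamma>)
  from Cons.prems(3)[unfolded \<gamma> mon_Cons] show ?case
  proof (cases rule: lmul_nonzeroE)
    case (1 j)
    have "(a(j := a j - 1), b) \<noteq> mdeg u"
    proof
      assume e: "(a(j := a j - 1), b) = mdeg u"
      have "mdeg (x # u) = ((a(j := a j - 1))(j := Suc (a j - 1)), b)"
        by (simp add: 1 mdeg_Cons_Cre flip: e)
      also have "\<dots> = \<gamma>" using 1 \<gamma> by auto
      finally show False using Cons.prems(2) by simp
    qed
    with 1 Cons.IH[OF ok] have "mlen n (a(j := a j - 1), b) + 2 \<le> length u" by blast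
    thus ?thesis using mlen_upd_fst[of n a j "a j - 1" b] \<gamma> by (auto split: if_splits)
  next
    case (2 j)
    have "(a, b(j := b j - 1)) \<noteq> mdeg u"
    proof
      assume e: "(a, b(j := b j - 1)) = mdeg u"
      have "mdeg (x # u) = (a, (b(j := b j - 1))(j := Suc (b j - 1)))"
        by (simp add: 2 mdeg_Cons_Ann flip: e)
      also have "\<dots> = \<gamma>" using 2 \<gamma> by auto
      finally show False using Cons.prems(2) by simp
    qed
    with 2 Cons.IH[OF ok] have "mlen n (a, b(j := b j - 1)) + 2 \<le> length u" by blast
    thus ?thesis using mlen_upd_snd[of n a b j "b j - 1"] \<gamma> by (auto split: if_splits)
  next
    case (3 j)
    have "mlen n (a(j := a j + 1), b) \<le> length u"
    proof (cases "(a(j := a j + 1), b) = mdeg u")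
      case False
      with 3 Cons.IH[OF ok] show ?thesis by fastforce
    qed (use mlen_mdeg[OF ok] in simp)
    moreover have "j < n" using 3 Cons.prems(1) by (simp add: gens_below_def)
    ultimately show ?thesis using mlen_upd_fst[of n a j "a j + 1" b] \<gamma> by simp
  qed
qed

section \<open>Right multiplication and the product\<close>

text \<open>Right multiplication by a generator, again in normal-ordered coordinates:
  \<open>a^(\<alpha>,\<beta>) a_j = a^(\<alpha>,\<beta>+e_j)\<close> and \<open>a^(\<alpha>,\<beta>) a_j^\<dagger> = a^(\<alpha>+e_j,\<beta>) + \<beta>_j a^(\<alpha>,\<beta>-e_j)\<close>.\<close>

fun rmul :: "gen \<Rightarrow> weyl \<Rightarrow> weyl" where
  "rmul (Ann j) g = (\<lambda>(\<alpha>, \<beta>). if \<beta> j > 0 then g (\<alpha>, \<beta>(j := \<beta> j - 1)) else 0)"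
| "rmul (Cre j) g = (\<lambda>(\<alpha>, \<beta>). (if \<alpha> j > 0 then g (\<alpha>(j := \<alpha> j - 1), \<beta>) else 0)
      + of_nat (\<beta> j + 1) * g (\<alpha>, \<beta>(j := \<beta> j + 1)))"

fun ract :: "gen list \<Rightarrow> weyl \<Rightarrow> weyl" where
  "ract [] g = g"
| "ract (y # ys) g = rmul y (ract ys g)"

lemma lmul_rmul_commute: "lmul x (rmul y g) = rmul y (lmul x g)"
proof -
  have "lmul (Cre j) (rmul y g) = rmul y (lmul (Cre j) g)"
    "lmul (Ann j) (rmul y g) = rmul y (lmul (Ann j) g)" for j
    by (cases y; cases "gidx y = j"; auto simp: fun_eq_iff fun_upd_twist algebra_simps)+
  thus ?thesis by (cases x) auto
qed

lemma act_ract_commute: "act u (ract ys g) = ract ys (act u g)"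
proof -
  have "lmul x (ract ys g) = ract ys (lmul x g)" for x g
    by (induction ys) (simp_all add: lmul_rmul_commute)
  thus ?thesis by (induction u) simp_all
qed

lemma rmul_add: "rmul x (f + g) = rmul x f + rmul x g"
  by (cases x) (auto simp: fun_eq_iff algebra_simps)

lemma rmul_wsmult: "rmul x (wsmult c f) = wsmult c (rmul x f)"
  by (cases x) (auto simp: fun_eq_iff algebra_simps)

lemma rmul_zero: "rmul x 0 = 0"
  by (cases x) (auto simp: fun_eq_iff)

lemma ract_add: "ract u (f + g) = ract u f + ract u g"
  by (induction u) (simp_all only: ract.simps rmul_add)

lemma ract_wsmult: "ract u (wsmult c f) = wsmult c (ract u f)"
  by (induction u) (simp_all only: ract.simps rmul_wsmult)

lemma ract_zero: "ract u 0 = 0"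
  by (induction u) (simp_all only: ract.simps rmul_zero)

lemma ract_sum: "ract u (\<Sum>i\<in>I. F i) = (\<Sum>i\<in>I. ract u (F i))"
  using sum_comp_morphism[of "ract u" F I] by (simp add: ract_zero ract_add comp_def)

lemma rmul_Ann_basis: "rmul (Ann j) (basis (a, b)) = basis (a, b(j := Suc (b j)))"
  by (auto simp: fun_eq_iff basis_apply)

lemma rmul_Cre_basis: "rmul (Cre j) (basis (a, \<lambda>_. 0)) = basis (a(j := Suc (a j)), \<lambda>_. 0)"
  by (auto simp: fun_eq_iff basis_apply)

lemma ract_basis_exists: "idx_below n \<delta> \<Longrightarrow> \<exists>ys. ract ys (basis (\<lambda>_. 0, \<lambda>_. 0)) = basis \<delta>"
proof (induction "mlen n \<delta>" arbitrary: \<delta> rule: less_induct)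
  case less
  obtain a b where \<delta>: "\<delta> = (a, b)" by (cases \<delta>)
  consider j where "j < n" "b j > 0" | j where "j < n" "a j > 0" "b = (\<lambda>_. 0)"
    | "a = (\<lambda>_. 0)" "b = (\<lambda>_. 0)"
  proof (cases "\<exists>j<n. b j > 0")
    case False
    with less.prems have "b = (\<lambda>_. 0)" by (auto simp: idx_below_def \<delta> fun_eq_iff not_less)
    with that less.prems show ?thesis
      unfolding idx_below_def \<delta> by (simp add: fun_eq_iff) (metis neq0_conv not_less)
  qed blast
  thus ?case
  proof cases
    case (1 j)
    have "mlen n (a, b(j := b j - 1)) < mlen n \<delta>"
      using mlen_upd_snd[of n a b j "b j - 1"] 1 by (simp add: \<delta>)
    moreover have "idx_below n (a, b(j := b j - 1))" using less.prems by (auto simp: idx_below_def \<delta>)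
    ultimately obtain ys where "ract ys (basis (\<lambda>_. 0, \<lambda>_. 0)) = basis (a, b(j := b j - 1))"
      using less.hyps by blast
    hence "ract (Ann j # ys) (basis (\<lambda>_. 0, \<lambda>_. 0)) = basis \<delta>"
      using 1 rmul_Ann_basis[of j a "b(j := b j - 1)"] by (simp del: rmul.simps add: \<delta>)
    thus ?thesis by blast
  next
    case (2 j)
    have "mlen n (a(j := a j - 1), b) < mlen n \<delta>"
      using mlen_upd_fst[of n a j "a j - 1" b] 2 by (simp add: \<delta>)
    moreover have "idx_below n (a(j := a j - 1), b)" using less.prems by (auto simp: idx_below_def \<delta>)
    ultimately obtain ys where "ract ys (basis (\<lambda>_. 0, \<lambda>_. 0)) = basis (a(j := a j - 1), b)"
      using less.hyps by blast
    hence "ract (Cre j # ys) (basis (\<lambda>_. 0, \<lambda>_. 0)) = basis \<delta>"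
      using 2 rmul_Cre_basis[of j "a(j := a j - 1)"] by (simp del: rmul.simps add: \<delta>)
    thus ?thesis by blast
  next
    case 3
    hence "ract [] (basis (\<lambda>_. 0, \<lambda>_. 0)) = basis \<delta>" by (simp add: \<delta>)
    thus ?thesis by blast
  qed
qed

definition cre_word :: "nat \<Rightarrow> (nat \<Rightarrow> nat) \<Rightarrow> gen list" where
  "cre_word n a = concat (map (\<lambda>j. replicate (a j) (Cre j)) [0..<n])"

definition ann_word :: "nat \<Rightarrow> (nat \<Rightarrow> nat) \<Rightarrow> gen list" where
  "ann_word n b = concat (map (\<lambda>j. replicate (b j) (Ann j)) [0..<n])"

lemma word_split: "word n \<gamma> = cre_word n (fst \<gamma>) @ ann_word n (snd \<gamma>)"
  by (simp add: word_def cre_word_def ann_word_def)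

lemma count_list_replicate: "count_list (replicate k x) y = (if x = y then k else 0)"
  by (induction k) auto

lemma count_list_concat_replicate:
  assumes "inj G"
  shows "count_list (concat (map (\<lambda>j. replicate (f j) (G j)) [0..<m])) (G i) = (if i < m then f i else 0)"
  by (induction m) (auto simp: count_list_replicate inj_eq[OF assms])

lemma count_list_cre_word: "(\<forall>i\<ge>n. a i = 0) \<Longrightarrow> count_list (cre_word n a) (Cre i) = a i"
  unfolding cre_word_def by (subst count_list_concat_replicate) (auto simp: inj_def)

lemma count_list_ann_word: "(\<forall>i\<ge>n. b i = 0) \<Longrightarrow> count_list (ann_word n b) (Ann i) = b i"
  unfolding ann_word_def by (subst count_list_concat_replicate) (auto simp: inj_def)

lemma act_cre_word_basis:
  "(\<forall>x\<in>set v. \<exists>j. x = Cre j) \<Longrightarrow> act v (basis (a, b)) = basis (\<lambda>i. a i + count_list v (Cre i), b)"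
proof (induction v)
  case (Cons x v)
  then obtain j where x: "x = Cre j" by auto
  have "(\<lambda>i. a i + count_list v (Cre i))(j := Suc (a j + count_list v (Cre j)))
      = (\<lambda>i. a i + count_list (x # v) (Cre i))"
    by (auto simp: fun_eq_iff x)
  moreover have "lmul (Cre j) (basis (a', b)) = basis (a'(j := Suc (a' j)), b)" for a'
    by (auto simp: fun_eq_iff basis_apply)
  ultimately show ?case using Cons by (simp add: x)
qed simp

lemma act_ann_word_basis:
  "(\<forall>x\<in>set v. \<exists>j. x = Ann j) \<Longrightarrow>
     act v (basis (\<lambda>_. 0, b)) = basis (\<lambda>_. 0, \<lambda>i. b i + count_list v (Ann i))"
proof (induction v)
  case (Cons x v)
  then obtain j where x: "x = Ann j" by auto
  have "(\<lambda>i. b i + count_list v (Ann i))(j := Suc (b j + count_list v (Ann j)))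
      = (\<lambda>i. b i + count_list (x # v) (Ann i))"
    by (auto simp: fun_eq_iff x)
  moreover have "lmul (Ann j) (basis (\<lambda>_. 0, b')) = basis (\<lambda>_. 0, b'(j := Suc (b' j)))" for b'
    by (auto simp: fun_eq_iff basis_apply)
  ultimately show ?case using Cons by (simp add: x)
qed simp

lemma mon_word: "idx_below n \<gamma> \<Longrightarrow> mon (word n \<gamma>) = basis \<gamma>"
proof -
  assume "idx_below n \<gamma>"
  hence a: "\<forall>i\<ge>n. fst \<gamma> i = 0" and b: "\<forall>i\<ge>n. snd \<gamma> i = 0" by (auto simp: idx_below_def)
  have "mon (word n \<gamma>) = act (cre_word n (fst \<gamma>)) (act (ann_word n (snd \<gamma>)) (basis (\<lambda>_. 0, \<lambda>_. 0)))"
    by (simp add: mon_def word_split act_append)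
  also have "\<dots> = basis \<gamma>"
    by (subst act_ann_word_basis, force simp: ann_word_def, subst act_cre_word_basis,
        force simp: cre_word_def) (simp add: count_list_cre_word[OF a] count_list_ann_word[OF b])
  finally show ?thesis .
qed

definition wsupp :: "weyl \<Rightarrow> midx set" where
  "wsupp f = {\<gamma>. f \<gamma> \<noteq> 0}"

lemma finite_idx_below_mlen_le: "finite {\<gamma>. idx_below n \<gamma> \<and> mlen n \<gamma> \<le> N}"
proof -
  let ?B = "{\<gamma>. idx_below n \<gamma> \<and> mlen n \<gamma> \<le> N}"
  let ?h = "\<lambda>\<gamma>. (map (fst \<gamma>) [0..<n], map (snd \<gamma>) [0..<n])"
  let ?L = "{xs. set xs \<subseteq> {..N} \<and> length xs = n}"
  have "inj_on ?h ?B"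
  proof (rule inj_onI)
    fix x y assume "x \<in> ?B" "y \<in> ?B" "?h x = ?h y"
    hence "fst x = fst y" "snd x = snd y" by (auto simp: fun_eq_iff idx_below_def map_eq_conv)
    thus "x = y" by (simp add: prod_eq_iff)
  qed
  moreover have "?h ` ?B \<subseteq> ?L \<times> ?L"
  proof (rule image_subsetI)
    fix \<gamma> assume \<gamma>: "\<gamma> \<in> ?B"
    have "fst \<gamma> j \<le> N \<and> snd \<gamma> j \<le> N" if "j < n" for j
    proof -
      have "fst \<gamma> j \<le> (\<Sum>i<n. fst \<gamma> i)" "snd \<gamma> j \<le> (\<Sum>i<n. snd \<gamma> i)"
        using that by (auto intro!: member_le_sum)
      thus ?thesis using \<gamma> by (auto simp: mlen_def)
    qed
    thus "?h \<gamma> \<in> ?L \<times> ?L" by auto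
  qed
  moreover have "finite (?L \<times> ?L)" by (auto intro: finite_lists_length_eq)
  ultimately show ?thesis by (meson finite_imageD finite_subset)
qed

lemma wsupp_mon_subset: "gens_below n u \<Longrightarrow> wsupp (mon u) \<subseteq> {\<gamma>. idx_below n \<gamma> \<and> mlen n \<gamma> \<le> length u}"
  using mon_nonzero_idx_below mon_nonzero_mlen by (auto simp: wsupp_def)

lemma finite_wsupp_mon: "gens_below n u \<Longrightarrow> finite (wsupp (mon u))"
  by (rule finite_subset[OF wsupp_mon_subset finite_idx_below_mlen_le])

lemma basis_expansion: "finite (wsupp f) \<Longrightarrow> (\<Sum>\<gamma>\<in>wsupp f. wsmult (f \<gamma>) (basis \<gamma>)) = f"
  by (rule ext) (simp add: sum_fun_apply basis_apply wsupp_def if_distrib cong: if_cong)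

lemma wmul_eq_sum:
  assumes "finite S" "wsupp f \<subseteq> S"
  shows "wmul n f g = (\<Sum>\<gamma>\<in>S. wsmult (f \<gamma>) (act (word n \<gamma>) g))"
proof -
  have "wmul n f g = (\<Sum>\<gamma>\<in>wsupp f. wsmult (f \<gamma>) (act (word n \<gamma>) g))"
    by (simp add: wmul_def wsupp_def wsmult_def)
  also have "\<dots> = (\<Sum>\<gamma>\<in>S. wsmult (f \<gamma>) (act (word n \<gamma>) g))"
    by (rule sum.mono_neutral_left) (use assms in \<open>auto simp: wsupp_def fun_eq_iff\<close>)
  finally show ?thesis .
qed

lemma wmul_linear_left:
  assumes "finite (wsupp f\<^sub>1)" "finite (wsupp f\<^sub>2)"
  shows "wmul n (\<lambda>\<gamma>. c\<^sub>1 * f\<^sub>1 \<gamma> + c\<^sub>2 * f\<^sub>2 \<gamma>) g = (\<lambda>\<delta>. c\<^sub>1 * wmul n f\<^sub>1 g \<delta> + c\<^sub>2 * wmul n f\<^sub>2 g \<delta>)"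
proof -
  let ?S = "wsupp f\<^sub>1 \<union> wsupp f\<^sub>2"
  have S: "wmul n h g = (\<Sum>\<gamma>\<in>?S. wsmult (h \<gamma>) (act (word n \<gamma>) g))" if "wsupp h \<subseteq> ?S" for h
    using wmul_eq_sum assms that by blast
  have "wsupp (\<lambda>\<gamma>. c\<^sub>1 * f\<^sub>1 \<gamma> + c\<^sub>2 * f\<^sub>2 \<gamma>) \<subseteq> ?S" by (auto simp: wsupp_def)
  thus ?thesis
    by (simp add: S S[of f\<^sub>1, OF Un_upper1] S[of f\<^sub>2, OF Un_upper2] fun_eq_iff sum_fun_apply
        sum_distrib_left sum.distrib distrib_right mult.assoc)
qed

text \<open>The defining sum of \<open>wmul\<close> reads each basis element of the left factor as a word;
  that this really is the product follows by writing the right factor as a right product of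
  generators applied to the unit, which commutes with left multiplication.\<close>

lemma wmul_mon_basis:
  assumes u: "gens_below n u" and \<delta>: "idx_below n \<delta>"
  shows "wmul n (mon u) (basis \<delta>) = act u (basis \<delta>)"
proof -
  obtain ys where ys: "ract ys (basis (\<lambda>_. 0, \<lambda>_. 0)) = basis \<delta>" using ract_basis_exists[OF \<delta>] by blast
  have "wmul n (mon u) (basis \<delta>) = (\<Sum>\<gamma>\<in>wsupp (mon u). wsmult (mon u \<gamma>) (ract ys (basis \<gamma>)))"
  proof (subst wmul_eq_sum[OF finite_wsupp_mon[OF u] order_refl], intro sum.cong refl)
    fix \<gamma> assume "\<gamma> \<in> wsupp (mon u)"
    hence "idx_below n \<gamma>" using mon_nonzero_idx_below[OF u] by (auto simp: wsupp_def)
    thus "wsmult (mon u \<gamma>) (act (word n \<gamma>) (basis \<delta>)) = wsmult (mon u \<gamma>) (ract ys (basis \<gamma>))"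
      by (simp add: ys[symmetric] act_ract_commute mon_word[symmetric] mon_def)
  qed
  also have "\<dots> = ract ys (\<Sum>\<gamma>\<in>wsupp (mon u). wsmult (mon u \<gamma>) (basis \<gamma>))"
    by (simp add: ract_sum ract_wsmult)
  also have "\<dots> = ract ys (mon u)" by (simp only: basis_expansion[OF finite_wsupp_mon[OF u]])
  also have "\<dots> = act u (basis \<delta>)" by (simp add: ys[symmetric] act_ract_commute mon_def)
  finally show ?thesis .
qed

lemma wmul_mon:
  assumes u: "gens_below n u" and fin: "finite (wsupp g)" and g: "\<And>\<delta>. \<delta> \<in> wsupp g \<Longrightarrow> idx_below n \<delta>"
  shows "wmul n (mon u) g = act u g"
proof -
  let ?D = "wsupp g" and ?S = "wsupp (mon u)"
  have act_g: "act v g = (\<Sum>\<delta>\<in>?D. wsmult (g \<delta>) (act v (basis \<delta>)))" for v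
    by (subst (1) basis_expansion[OF fin, symmetric]) (simp add: act_sum act_wsmult)
  have "wmul n (mon u) g
      = (\<Sum>\<gamma>\<in>?S. wsmult (mon u \<gamma>) (\<Sum>\<delta>\<in>?D. wsmult (g \<delta>) (act (word n \<gamma>) (basis \<delta>))))"
    by (simp only: wmul_eq_sum[OF finite_wsupp_mon[OF u] order_refl] act_g)
  also have "\<dots> = (\<Sum>\<delta>\<in>?D. wsmult (g \<delta>) (\<Sum>\<gamma>\<in>?S. wsmult (mon u \<gamma>) (act (word n \<gamma>) (basis \<delta>))))"
    by (rule ext) (simp add: sum_fun_apply sum_distrib_left mult.left_commute sum.swap[of _ ?S])
  also have "\<dots> = (\<Sum>\<delta>\<in>?D. wsmult (g \<delta>) (act u (basis \<delta>)))"
    using wmul_mon_basis[OF u g] wmul_eq_sum[OF finite_wsupp_mon[OF u] order_refl]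
    by (intro sum.cong refl) simp
  also have "\<dots> = act u g" by (simp only: act_g)
  finally show ?thesis .
qed

section \<open>The leading term of a commutator of monomials\<close>

definition contract_word :: "gen list \<Rightarrow> gen list \<Rightarrow> nat \<Rightarrow> nat \<Rightarrow> gen list" where
  "contract_word u v i j = take i u @ take j v @ drop (Suc j) v @ drop (Suc i) u"

definition dec_idx :: "midx \<Rightarrow> nat \<Rightarrow> midx" where
  "dec_idx \<gamma> k = (\<lambda>m. fst \<gamma> m - (if m = k then 1 else 0), \<lambda>m. snd \<gamma> m - (if m = k then 1 else 0))"

lemma mon_append_swap:
  "mon (u @ v) - mon (v @ u)
   = (\<Sum>i<length u. \<Sum>j<length v. wsmult (ccr (u!i) (v!j)) (mon (contract_word u v i j)))"
  unfolding mon_def contract_word_def using act_append_swap[of u v] by simp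

lemma length_contract_word:
  "i < length u \<Longrightarrow> j < length v \<Longrightarrow> length (contract_word u v i j) + 2 = length u + length v"
  by (simp add: contract_word_def)

lemma gens_below_contract_word:
  "gens_below n u \<Longrightarrow> gens_below n v \<Longrightarrow> gens_below n (contract_word u v i j)"
  unfolding gens_below_def contract_word_def by (auto dest: in_set_takeD in_set_dropD)

lemma count_list_nth_split:
  "i < length u \<Longrightarrow>
   count_list u x = count_list (take i u) x + (if u!i = x then 1 else 0) + count_list (drop (Suc i) u) x"
  by (subst (1) id_take_nth_drop[of i u]) simp_all

lemma mdeg_contract_word:
  assumes i: "i < length u" and j: "j < length v" and "ccr (u!i) (v!j) \<noteq> 0"
  shows "mdeg (contract_word u v i j) = dec_idx (mdeg (u @ v)) (gidx (u!i))"
proof -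
  have "(\<exists>k. u!i = Ann k \<and> v!j = Cre k) \<or> (\<exists>k. u!i = Cre k \<and> v!j = Ann k)"
    using assms(3) by (cases "u!i"; cases "v!j") (auto split: if_splits)
  thus ?thesis
    using count_list_nth_split[OF i] count_list_nth_split[OF j]
    by (auto simp: mdeg_def dec_idx_def contract_word_def fun_eq_iff)
qed

lemma mon_append_swap_lower:
  assumes u: "gens_below n u" and v: "gens_below n v"
    and nz: "(mon (u @ v) - mon (v @ u)
        - (\<Sum>i<length u. \<Sum>j<length v. wsmult (ccr (u!i) (v!j)) (basis (mdeg (contract_word u v i j))))) \<gamma> \<noteq> 0"
  shows "mlen n \<gamma> + 4 \<le> length u + length v"
proof -
  let ?w = "contract_word u v"
  have "(\<Sum>i<length u. \<Sum>j<length v. ccr (u!i) (v!j) * (mon (?w i j) \<gamma> - basis (mdeg (?w i j)) \<gamma>)) \<noteq> 0"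
    using nz unfolding mon_append_swap by (simp add: sum_fun_apply sum_subtractf[symmetric] algebra_simps)
  then obtain i j where i: "i < length u" and j: "j < length v"
    and t: "ccr (u!i) (v!j) * (mon (?w i j) \<gamma> - basis (mdeg (?w i j)) \<gamma>) \<noteq> 0"
    by (metis (no_types, lifting) lessThan_iff sum.neutral)
  have ok: "gens_below n (?w i j)" by (rule gens_below_contract_word[OF u v])
  have "\<gamma> \<noteq> mdeg (?w i j)" using t mon_mdeg[OF ok] by (auto simp: basis_apply)
  moreover have "mon (?w i j) \<gamma> \<noteq> 0" using t calculation by (auto simp: basis_apply)
  ultimately show ?thesis using mon_lower[OF ok] length_contract_word[OF i j] by fastforce
qed

lemma sum_list_map_ccr:
  "sum_list (map (ccr x) v)
   = (case x of Ann k \<Rightarrow> of_nat (count_list v (Cre k)) | Cre k \<Rightarrow> - of_nat (count_list v (Ann k)))"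
proof -
  have "ccr (Cre k) y = (if y = Ann k then -1 else 0)" "ccr (Ann k) y = (if y = Cre k then 1 else 0)" for k y
    by (cases y; simp)+
  thus ?thesis by (cases x; induction v) auto
qed

lemma sum_list_map_by_mode:
  assumes "gens_below n u"
  shows "sum_list (map H u)
    = (\<Sum>k<n. wsmult (of_nat (count_list u (Ann k))) (H (Ann k)) + wsmult (of_nat (count_list u (Cre k))) (H (Cre k)))"
  using assms
proof (induction u)
  case Nil thus ?case by (simp add: fun_eq_iff sum_fun_apply)
next
  case (Cons x u)
  have ok: "gens_below n u" and xn: "gidx x < n" using Cons.prems by (auto simp: gens_below_def)
  note IH = Cons.IH[OF ok]
  have "(\<Sum>k<n. wsmult (of_nat (count_list (x # u) (Ann k))) (H (Ann k))
        + wsmult (of_nat (count_list (x # u) (Cre k))) (H (Cre k)))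
      = (\<Sum>k<n. (wsmult (of_nat (count_list u (Ann k))) (H (Ann k))
        + wsmult (of_nat (count_list u (Cre k))) (H (Cre k))) + (if k = gidx x then H x else 0))"
    by (intro sum.cong refl) (cases x; auto simp: fun_eq_iff algebra_simps)
  also have "\<dots> = sum_list (map H u) + (\<Sum>k<n. if k = gidx x then H x else 0)"
    by (simp only: sum.distrib[where h = "\<lambda>k. if k = gidx x then H x else 0"] IH)
  also have "(\<Sum>k<n. if k = gidx x then H x else 0) = H x" using xn by simp
  finally show ?case by (simp add: add.commute)
qed

lemma sum_ccr_basis_contract_word:
  assumes "gens_below n u"
  shows "(\<Sum>i<length u. \<Sum>j<length v. wsmult (ccr (u!i) (v!j)) (basis (mdeg (contract_word u v i j))))
    = (\<Sum>k<n. wsmult (of_nat (count_list u (Ann k) * count_list v (Cre k))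
        - of_nat (count_list u (Cre k) * count_list v (Ann k))) (basis (dec_idx (mdeg (u @ v)) k)))"
proof -
  let ?B = "\<lambda>k. basis (dec_idx (mdeg (u @ v)) k)"
  have "(\<Sum>i<length u. \<Sum>j<length v. wsmult (ccr (u!i) (v!j)) (basis (mdeg (contract_word u v i j))))
      = (\<Sum>i<length u. \<Sum>j<length v. wsmult (ccr (u!i) (v!j)) (?B (gidx (u!i))))"
    by (intro sum.cong refl, rename_tac i j, case_tac "ccr (u!i) (v!j) = 0")
       (simp_all add: mdeg_contract_word)
  also have "\<dots> = sum_list (map (\<lambda>x. wsmult (sum_list (map (ccr x) v)) (?B (gidx x))) u)"
    by (simp add: sum_list_sum_nth atLeast0LessThan fun_eq_iff sum_fun_apply sum_distrib_right)
  also have "\<dots> = (\<Sum>k<n. wsmult (of_nat (count_list u (Ann k) * count_list v (Cre k))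
        - of_nat (count_list u (Cre k) * count_list v (Ann k))) (?B k))"
    by (simp add: sum_list_map_by_mode[OF assms] sum_list_map_ccr fun_eq_iff sum_fun_apply algebra_simps)
  finally show ?thesis .
qed

lemma mon_commutator_lower:
  assumes "gens_below n u" "gens_below n v"
    and "(mon (u @ v) - mon (v @ u)
          - (\<Sum>k<n. wsmult (of_nat (count_list u (Ann k) * count_list v (Cre k))
              - of_nat (count_list u (Cre k) * count_list v (Ann k))) (basis (dec_idx (mdeg (u @ v)) k)))) \<gamma> \<noteq> 0"
  shows "mlen n \<gamma> + 4 \<le> length u + length v"
  using mon_append_swap_lower[OF assms(1,2)] sum_ccr_basis_contract_word[OF assms(1)] assms(3) by simp

section \<open>Charge-free monomials commute\<close>

definition charge :: "midx \<Rightarrow> nat \<Rightarrow> int" where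
  "charge \<gamma> j = int (fst \<gamma> j) - int (snd \<gamma> j)"

definition charge_free :: "gen list \<Rightarrow> bool" where
  "charge_free u \<longleftrightarrow> (\<forall>j. count_list u (Cre j) = count_list u (Ann j))"

lemma act_nonzero_charge:
  "act v f \<gamma> \<noteq> 0 \<Longrightarrow>
   \<exists>\<delta>. f \<delta> \<noteq> 0 \<and> (\<forall>j. charge \<gamma> j = charge \<delta> j + int (count_list v (Cre j)) - int (count_list v (Ann j)))"
proof (induction v arbitrary: \<gamma>)
  case (Cons x v)
  obtain a b where \<gamma>: "\<gamma> = (a, b)" by (cases \<gamma>)
  from Cons.prems[unfolded \<gamma>] obtain \<delta>\<^sub>1 where nz: "act v f \<delta>\<^sub>1 \<noteq> 0"
    and step: "\<forall>j. charge \<gamma> j = charge \<delta>\<^sub>1 j + (if x = Cre j then 1 else 0) - (if x = Ann j then 1 else 0)"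
    by (cases rule: lmul_nonzeroE[OF Cons.prems[unfolded \<gamma> act.simps]])
       (fastforce simp: charge_def \<gamma> of_nat_diff)+
  from Cons.IH[OF nz] step show ?case by fastforce
qed auto

text \<open>Entries \<open>(\<rho>, 0)\<close> of a left product depend only on the entries \<open>(\<rho>, 0)\<close> of the right factor:
  these rows carry the Fock representation, \<open>a_j^\<dagger>\<close> acting as a shift and \<open>a_j\<close> as a
  weighted backward shift.\<close>

lemma act_row_cong:
  assumes "\<And>\<rho>. g (\<rho>, \<lambda>_. 0) = g' (\<rho>, \<lambda>_. 0)"
  shows "act v g (\<rho>, \<lambda>_. 0) = act v g' (\<rho>, \<lambda>_. 0)"
proof (induction v arbitrary: \<rho>)
  case (Cons x v)
  have "act (x # v) h (\<rho>, \<lambda>_. 0) = (case x of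
      Cre j \<Rightarrow> if 0 < \<rho> j then act v h (\<rho>(j := \<rho> j - 1), \<lambda>_. 0) else 0
    | Ann j \<Rightarrow> of_nat (\<rho> j + 1) * act v h (\<rho>(j := \<rho> j + 1), \<lambda>_. 0))" for h
    by (cases x) simp_all
  thus ?case by (simp only: Cons.IH)
qed (use assms in simp)

lemma act_ann_word_row:
  assumes "\<forall>x\<in>set v. \<exists>j. x = Ann j"
  shows "\<exists>c::nat. c > 0 \<and> act v g (\<rho>, \<lambda>_. 0) = of_nat c * g (\<lambda>j. \<rho> j + count_list v (Ann j), \<lambda>_. 0)"
  using assms
proof (induction v arbitrary: \<rho>)
  case (Cons x v)
  then obtain j where x: "x = Ann j" and v: "\<forall>x\<in>set v. \<exists>j. x = Ann j" by auto
  from Cons.IH[OF v, of "\<rho>(j := \<rho> j + 1)"] obtain c where c: "c > 0"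
    and e: "act v g (\<rho>(j := \<rho> j + 1), \<lambda>_. 0)
            = of_nat c * g (\<lambda>i. (\<rho>(j := \<rho> j + 1)) i + count_list v (Ann i), \<lambda>_. 0)"
    by blast
  have "(\<lambda>i. (\<rho>(j := \<rho> j + 1)) i + count_list v (Ann i)) = (\<lambda>i. \<rho> i + count_list (x # v) (Ann i))"
    by (auto simp: fun_eq_iff x)
  moreover have "act (x # v) g (\<rho>, \<lambda>_. 0) = of_nat (\<rho> j + 1) * act v g (\<rho>(j := \<rho> j + 1), \<lambda>_. 0)"
    by (simp add: x)
  ultimately have "act (x # v) g (\<rho>, \<lambda>_. 0)
      = of_nat ((\<rho> j + 1) * c) * g (\<lambda>i. \<rho> i + count_list (x # v) (Ann i), \<lambda>_. 0)"
    by (simp only: e of_nat_mult mult.assoc)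
  thus ?case using c by (intro exI[of _ "(\<rho> j + 1) * c"]) auto
qed auto

lemma act_cre_word_row:
  assumes "\<forall>x\<in>set v. \<exists>j. x = Cre j"
  shows "act v g (\<rho>, \<lambda>_. 0)
    = (if \<forall>j. count_list v (Cre j) \<le> \<rho> j then g (\<lambda>j. \<rho> j - count_list v (Cre j), \<lambda>_. 0) else 0)"
  using assms
proof (induction v arbitrary: \<rho>)
  case (Cons x v)
  then obtain j where x: "x = Cre j" and v: "\<forall>x\<in>set v. \<exists>j. x = Cre j" by auto
  show ?case
  proof (cases "\<rho> j > 0")
    case True
    have "act (x # v) g (\<rho>, \<lambda>_. 0) = act v g (\<rho>(j := \<rho> j - 1), \<lambda>_. 0)" using True by (simp add: x)
    also have "\<dots> = (if \<forall>i. count_list v (Cre i) \<le> (\<rho>(j := \<rho> j - 1)) i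
        then g (\<lambda>i. (\<rho>(j := \<rho> j - 1)) i - count_list v (Cre i), \<lambda>_. 0) else 0)"
      by (rule Cons.IH[OF v])
    also have "(\<forall>i. count_list v (Cre i) \<le> (\<rho>(j := \<rho> j - 1)) i) = (\<forall>i. count_list (x # v) (Cre i) \<le> \<rho> i)"
      using True by (auto simp: x)
    also have "(\<lambda>i. (\<rho>(j := \<rho> j - 1)) i - count_list v (Cre i)) = (\<lambda>i. \<rho> i - count_list (x # v) (Cre i))"
      by (auto simp: fun_eq_iff x)
    finally show ?thesis .
  qed (auto simp: x intro!: exI[of _ j])
qed simp

lemma act_word_row_nonzero_iff:
  assumes "idx_below n \<gamma>"
  shows "act (word n \<gamma>) (basis (\<sigma>, \<lambda>_. 0)) (\<rho>, \<lambda>_. 0) \<noteq> 0 \<longleftrightarrow>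
    (\<forall>j. fst \<gamma> j \<le> \<rho> j) \<and> (\<lambda>j. \<rho> j - fst \<gamma> j + snd \<gamma> j) = \<sigma>"
proof -
  let ?C = "cre_word n (fst \<gamma>)" and ?A = "ann_word n (snd \<gamma>)"
  have a: "\<forall>i\<ge>n. fst \<gamma> i = 0" and b: "\<forall>i\<ge>n. snd \<gamma> i = 0" using assms by (auto simp: idx_below_def)
  obtain c :: nat where c: "c > 0" and
    ec: "act ?A (basis (\<sigma>, \<lambda>_. 0)) (\<lambda>j. \<rho> j - fst \<gamma> j, \<lambda>_. 0)
      = of_nat c * basis (\<sigma>, \<lambda>_. 0) (\<lambda>j. \<rho> j - fst \<gamma> j + count_list ?A (Ann j), \<lambda>_. 0)"
    using act_ann_word_row[of ?A "basis (\<sigma>, \<lambda>_. 0)" "\<lambda>j. \<rho> j - fst \<gamma> j"] by (force simp: ann_word_def)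
  have "act (word n \<gamma>) (basis (\<sigma>, \<lambda>_. 0)) (\<rho>, \<lambda>_. 0) = act ?C (act ?A (basis (\<sigma>, \<lambda>_. 0))) (\<rho>, \<lambda>_. 0)"
    by (simp add: word_split act_append)
  also have "\<dots> = (if \<forall>j. count_list ?C (Cre j) \<le> \<rho> j
      then act ?A (basis (\<sigma>, \<lambda>_. 0)) (\<lambda>j. \<rho> j - count_list ?C (Cre j), \<lambda>_. 0) else 0)"
    by (rule act_cre_word_row) (auto simp: cre_word_def)
  finally have "act (word n \<gamma>) (basis (\<sigma>, \<lambda>_. 0)) (\<rho>, \<lambda>_. 0)
      = (if \<forall>j. fst \<gamma> j \<le> \<rho> j then act ?A (basis (\<sigma>, \<lambda>_. 0)) (\<lambda>j. \<rho> j - fst \<gamma> j, \<lambda>_. 0) else 0)"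
    by (simp only: count_list_cre_word[OF a])
  thus ?thesis using c ec by (simp add: count_list_ann_word[OF b] basis_apply)
qed

lemma act_charge_free_row:
  assumes "charge_free u"
  shows "act u (basis (\<sigma>, \<lambda>_. 0)) (\<rho>, \<lambda>_. 0)
    = (if \<rho> = \<sigma> then act u (basis (\<sigma>, \<lambda>_. 0)) (\<sigma>, \<lambda>_. 0) else 0)"
proof (cases "\<rho> = \<sigma>")
  case False
  show ?thesis
  proof (rule ccontr)
    assume "\<not> ?thesis"
    with False obtain \<delta> where "basis (\<sigma>, \<lambda>_. 0) \<delta> \<noteq> 0"
      and "\<forall>j. charge (\<rho>, \<lambda>_. 0) j = charge \<delta> j + int (count_list u (Cre j)) - int (count_list u (Ann j))"
      using act_nonzero_charge[of u "basis (\<sigma>, \<lambda>_. 0)" "(\<rho>, \<lambda>_. 0)"] by auto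
    with assms have "\<rho> = \<sigma>" by (auto simp: basis_apply charge_def charge_free_def fun_eq_iff split: if_splits)
    with False show False by simp
  qed
qed simp

text \<open>Charge-free words act diagonally in the Fock representation, so they commute there.\<close>

lemma act_charge_free_row_commute:
  assumes "charge_free u" "charge_free v"
  shows "act (u @ v) (basis (\<sigma>, \<lambda>_. 0)) (\<rho>, \<lambda>_. 0) = act (v @ u) (basis (\<sigma>, \<lambda>_. 0)) (\<rho>, \<lambda>_. 0)"
proof -
  have diag: "act (a @ b) (basis (\<sigma>, \<lambda>_. 0)) (\<rho>, \<lambda>_. 0)
      = act b (basis (\<sigma>, \<lambda>_. 0)) (\<sigma>, \<lambda>_. 0) * (if \<rho> = \<sigma> then act a (basis (\<sigma>, \<lambda>_. 0)) (\<sigma>, \<lambda>_. 0) else 0)"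
    if "charge_free a" "charge_free b" for a b
  proof -
    let ?c = "act b (basis (\<sigma>, \<lambda>_. 0)) (\<sigma>, \<lambda>_. 0)"
    have "act a (act b (basis (\<sigma>, \<lambda>_. 0))) (\<rho>, \<lambda>_. 0) = act a (wsmult ?c (basis (\<sigma>, \<lambda>_. 0))) (\<rho>, \<lambda>_. 0)"
      by (rule act_row_cong, subst act_charge_free_row[OF that(2)]) (simp add: basis_apply)
    thus ?thesis
      by (simp add: act_append act_wsmult, subst act_charge_free_row[OF that(1)]) simp
  qed
  show ?thesis using diag[OF assms] diag[OF assms(2,1)] by simp
qed

text \<open>Take a support element \<open>(\<alpha>\<^sub>0, \<beta>\<^sub>0)\<close> with \<open>|\<beta>\<^sub>0|\<close> minimal; applied to \<open>(\<beta>\<^sub>0, 0)\<close>,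
  it is the only support element contributing to the entry \<open>(\<alpha>\<^sub>0, 0)\<close>.\<close>

lemma wmul_row_faithful:
  assumes fin: "finite (wsupp f)" and below: "\<And>\<gamma>. \<gamma> \<in> wsupp f \<Longrightarrow> idx_below n \<gamma>"
    and rows: "\<And>\<alpha> \<beta>. idx_below n (\<beta>, \<lambda>_. 0) \<Longrightarrow> wmul n f (basis (\<beta>, \<lambda>_. 0)) (\<alpha>, \<lambda>_. 0) = 0"
  shows "f = 0"
proof (rule ccontr)
  assume "f \<noteq> 0"
  then obtain \<gamma>\<^sub>1 where "f \<gamma>\<^sub>1 \<noteq> 0" by (auto simp: fun_eq_iff)
  then obtain \<gamma>\<^sub>0 where nz: "f \<gamma>\<^sub>0 \<noteq> 0"
    and least: "\<And>\<gamma>. f \<gamma> \<noteq> 0 \<Longrightarrow> (\<Sum>j<n. snd \<gamma>\<^sub>0 j) \<le> (\<Sum>j<n. snd \<gamma> j)"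
    using ex_has_least_nat[of "\<lambda>\<gamma>. f \<gamma> \<noteq> 0" \<gamma>\<^sub>1 "\<lambda>\<gamma>. \<Sum>j<n. snd \<gamma> j"] by blast
  obtain \<alpha>\<^sub>0 \<beta>\<^sub>0 where \<gamma>\<^sub>0: "\<gamma>\<^sub>0 = (\<alpha>\<^sub>0, \<beta>\<^sub>0)" by (cases \<gamma>\<^sub>0)
  have below\<^sub>0: "idx_below n \<gamma>\<^sub>0" using below nz by (simp add: wsupp_def)
  let ?e = "\<lambda>\<gamma>. f \<gamma> * act (word n \<gamma>) (basis (\<beta>\<^sub>0, \<lambda>_. 0)) (\<alpha>\<^sub>0, \<lambda>_. 0)"
  have others: "?e \<gamma> = 0" if "\<gamma> \<in> wsupp f - {\<gamma>\<^sub>0}" for \<gamma>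
  proof (rule ccontr)
    obtain a b where \<gamma>: "\<gamma> = (a, b)" by (cases \<gamma>)
    assume "?e \<gamma> \<noteq> 0"
    with act_word_row_nonzero_iff[of n \<gamma>] below that
    have nz\<gamma>: "f \<gamma> \<noteq> 0" and le: "\<forall>j. a j \<le> \<alpha>\<^sub>0 j" and \<beta>\<^sub>0: "\<beta>\<^sub>0 = (\<lambda>j. \<alpha>\<^sub>0 j - a j + b j)"
      by (auto simp: \<gamma>)
    have "(\<Sum>j<n. \<alpha>\<^sub>0 j - a j) + (\<Sum>j<n. b j) \<le> (\<Sum>j<n. b j)"
      using least[OF nz\<gamma>] by (simp add: \<gamma>\<^sub>0 \<gamma> \<beta>\<^sub>0 sum.distrib)
    hence "\<forall>j<n. a j = \<alpha>\<^sub>0 j" using le by (simp add: le_antisym)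
    moreover have "\<forall>j\<ge>n. a j = 0 \<and> \<alpha>\<^sub>0 j = 0"
      using below[OF DiffD1[OF that]] below\<^sub>0 by (simp add: idx_below_def \<gamma> \<gamma>\<^sub>0)
    ultimately have "a = \<alpha>\<^sub>0" by (metis ext not_le)
    with \<beta>\<^sub>0 that show False by (simp add: \<gamma> \<gamma>\<^sub>0)
  qed
  have "idx_below n (\<beta>\<^sub>0, \<lambda>_. 0)" using below\<^sub>0 by (simp add: idx_below_def \<gamma>\<^sub>0)
  hence "0 = (\<Sum>\<gamma>\<in>wsupp f. ?e \<gamma>)"
    using rows by (simp add: wmul_eq_sum[OF fin order_refl] sum_fun_apply)
  also have "\<dots> = ?e \<gamma>\<^sub>0"
    using nz others by (subst sum.mono_neutral_right[OF fin, of "{\<gamma>\<^sub>0}"]) (auto simp: wsupp_def)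
  also have "\<dots> \<noteq> 0" using nz act_word_row_nonzero_iff[OF below\<^sub>0] by (simp add: \<gamma>\<^sub>0)
  finally show False by simp
qed

lemma mon_append_commute_if_charge_free:
  assumes u: "gens_below n u" and v: "gens_below n v" and "charge_free u" "charge_free v"
  shows "mon (u @ v) = mon (v @ u)"
proof -
  let ?f = "\<lambda>\<gamma>. 1 * mon (u @ v) \<gamma> + (- 1) * mon (v @ u) \<gamma>"
  have uv: "gens_below n (u @ v)" "gens_below n (v @ u)" using u v by simp_all
  have "?f = 0"
  proof (rule wmul_row_faithful)
    have "wsupp ?f \<subseteq> wsupp (mon (u @ v)) \<union> wsupp (mon (v @ u))" by (auto simp: wsupp_def)
    thus "finite (wsupp ?f)" by (rule finite_subset) (simp add: finite_wsupp_mon[OF uv(1)] finite_wsupp_mon[OF uv(2)])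
    show "idx_below n \<gamma>" if "\<gamma> \<in> wsupp ?f" for \<gamma>
      using that mon_nonzero_idx_below[OF uv(1), of \<gamma>] mon_nonzero_idx_below[OF uv(2), of \<gamma>]
      by (force simp: wsupp_def)
    fix \<alpha> \<beta> assume \<beta>: "idx_below n (\<beta>, \<lambda>_. 0)"
    have "wmul n (mon w) (basis (\<beta>, \<lambda>_. 0)) = act w (basis (\<beta>, \<lambda>_. 0))" if "gens_below n w" for w
      by (rule wmul_mon_basis[OF that \<beta>])
    moreover have "wmul n ?f (basis (\<beta>, \<lambda>_. 0)) = (\<lambda>\<delta>. 1 * wmul n (mon (u @ v)) (basis (\<beta>, \<lambda>_. 0)) \<delta>
        + (- 1) * wmul n (mon (v @ u)) (basis (\<beta>, \<lambda>_. 0)) \<delta>)"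
      by (rule wmul_linear_left) (simp_all add: finite_wsupp_mon[OF uv(1)] finite_wsupp_mon[OF uv(2)])
    ultimately show "wmul n ?f (basis (\<beta>, \<lambda>_. 0)) (\<alpha>, \<lambda>_. 0) = 0"
      using act_charge_free_row_commute[OF assms(3,4)] uv by simp
  qed
  thus ?thesis by (simp add: fun_eq_iff)
qed

section \<open>Degrees\<close>

lemma wdeg_eqI:
  assumes fin: "finite (wsupp f)" and nz: "f \<gamma>\<^sub>0 \<noteq> 0" and le: "\<And>\<gamma>. f \<gamma> \<noteq> 0 \<Longrightarrow> mlen n \<gamma> \<le> mlen n \<gamma>\<^sub>0"
  shows "wdeg n f = real (mlen n \<gamma>\<^sub>0)"
proof -
  have "{mlen n \<gamma> | \<gamma>. f \<gamma> \<noteq> 0} = mlen n ` wsupp f" by (auto simp: wsupp_def)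
  hence "Max {mlen n \<gamma> | \<gamma>. f \<gamma> \<noteq> 0} = mlen n \<gamma>\<^sub>0"
    using fin le nz by (intro Max_eqI) (auto simp: wsupp_def)
  moreover have "f \<noteq> 0" using nz by auto
  ultimately show ?thesis by (simp add: wdeg_def)
qed

lemma wdeg_less:
  assumes fin: "finite (wsupp f)" and less: "\<And>\<gamma>. f \<gamma> \<noteq> 0 \<Longrightarrow> real (mlen n \<gamma>) < d"
  shows "wdeg n f < ereal d"
proof (cases "f = 0")
  case False
  then obtain \<gamma>\<^sub>1 where "f \<gamma>\<^sub>1 \<noteq> 0" by (auto simp: fun_eq_iff)
  have eq: "{mlen n \<gamma> | \<gamma>. f \<gamma> \<noteq> 0} = mlen n ` wsupp f" by (auto simp: wsupp_def)
  have "\<gamma>\<^sub>1 \<in> wsupp f" using \<open>f \<gamma>\<^sub>1 \<noteq> 0\<close> by (simp add: wsupp_def)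
  hence "Max (mlen n ` wsupp f) \<in> mlen n ` wsupp f" using fin by (intro Max_in) auto
  then obtain \<gamma> where \<gamma>: "f \<gamma> \<noteq> 0" "Max (mlen n ` wsupp f) = mlen n \<gamma>" by (auto simp: wsupp_def)
  hence "wdeg n f = real (mlen n \<gamma>)" using False by (simp only: wdeg_def eq) simp
  with less \<gamma> show ?thesis by simp
qed (simp add: wdeg_def)

lemma wdeg_wsmult: "c \<noteq> 0 \<Longrightarrow> wdeg n (wsmult c f) = wdeg n f"
  by (simp add: wdeg_def wsmult_def fun_eq_iff)

definition adj_word :: "gen list \<Rightarrow> gen list" where
  "adj_word w = rev (map gdag w)"

lemma count_list_adj_word:
  "count_list (adj_word w) (Cre j) = count_list w (Ann j)"
  "count_list (adj_word w) (Ann j) = count_list w (Cre j)"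
proof -
  have "gdag x = Cre j \<longleftrightarrow> x = Ann j" "gdag x = Ann j \<longleftrightarrow> x = Cre j" for x by (cases x; auto)+
  thus "count_list (adj_word w) (Cre j) = count_list w (Ann j)"
    "count_list (adj_word w) (Ann j) = count_list w (Cre j)"
    by (induction w) (auto simp: adj_word_def)
qed

lemma mdeg_adj_word: "mdeg (adj_word w) = (snd (mdeg w), fst (mdeg w))"
  by (simp add: mdeg_def count_list_adj_word)

lemma length_adj_word [simp]: "length (adj_word w) = length w"
  by (simp add: adj_word_def)

lemma gens_below_adj_word: "gens_below n w \<Longrightarrow> gens_below n (adj_word w)"
proof -
  have "gidx (gdag x) = gidx x" for x by (cases x) auto
  thus "gens_below n w \<Longrightarrow> gens_below n (adj_word w)" by (auto simp: gens_below_def adj_word_def)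
qed

lemma wmul_mon_comb:
  assumes "gens_below n u\<^sub>1" "gens_below n u\<^sub>2" "gens_below n v\<^sub>1" "gens_below n v\<^sub>2"
  shows "wmul n (\<lambda>\<gamma>. c\<^sub>1 * mon u\<^sub>1 \<gamma> + c\<^sub>2 * mon u\<^sub>2 \<gamma>) (\<lambda>\<gamma>. d\<^sub>1 * mon v\<^sub>1 \<gamma> + d\<^sub>2 * mon v\<^sub>2 \<gamma>)
    = (\<lambda>\<gamma>. c\<^sub>1 * (d\<^sub>1 * mon (u\<^sub>1 @ v\<^sub>1) \<gamma> + d\<^sub>2 * mon (u\<^sub>1 @ v\<^sub>2) \<gamma>)
         + c\<^sub>2 * (d\<^sub>1 * mon (u\<^sub>2 @ v\<^sub>1) \<gamma> + d\<^sub>2 * mon (u\<^sub>2 @ v\<^sub>2) \<gamma>))"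
proof -
  let ?g = "\<lambda>\<gamma>. d\<^sub>1 * mon v\<^sub>1 \<gamma> + d\<^sub>2 * mon v\<^sub>2 \<gamma>"
  have g: "?g = wsmult d\<^sub>1 (mon v\<^sub>1) + wsmult d\<^sub>2 (mon v\<^sub>2)" by (simp add: fun_eq_iff)
  have supp: "wsupp ?g \<subseteq> wsupp (mon v\<^sub>1) \<union> wsupp (mon v\<^sub>2)" by (auto simp: wsupp_def)
  have fin: "finite (wsupp ?g)"
    using finite_subset[OF supp] finite_wsupp_mon assms(3,4) by blast
  have below: "idx_below n \<delta>" if "\<delta> \<in> wsupp ?g" for \<delta>
    using that mon_nonzero_idx_below[OF assms(3), of \<delta>] mon_nonzero_idx_below[OF assms(4), of \<delta>]
    by (force simp: wsupp_def)
  have "act u ?g = (\<lambda>\<gamma>. d\<^sub>1 * mon (u @ v\<^sub>1) \<gamma> + d\<^sub>2 * mon (u @ v\<^sub>2) \<gamma>)" for u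
    by (simp add: g act_add act_wsmult mon_append fun_eq_iff)
  thus ?thesis
    using wmul_linear_left[of "mon u\<^sub>1" "mon u\<^sub>2" n c\<^sub>1 c\<^sub>2 ?g] finite_wsupp_mon assms
      wmul_mon[OF _ fin below] by simp
qed

lemma comm_g_plus_g_minus:
  assumes "gens_below n w"
  shows "comm n (g_plus w) (g_minus w) = wsmult (2 * \<i>) (mon (w @ adj_word w) - mon (adj_word w @ w))"
proof -
  let ?w' = "adj_word w"
  have ok: "gens_below n ?w'" using gens_below_adj_word[OF assms] .
  have gp: "g_plus w = (\<lambda>\<gamma>. \<i> * mon ?w' \<gamma> + \<i> * mon w \<gamma>)"
    by (simp add: g_plus_def mon_adj_def adj_word_def fun_eq_iff algebra_simps)
  have gm: "g_minus w = (\<lambda>\<gamma>. 1 * mon ?w' \<gamma> + (- 1) * mon w \<gamma>)"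
    by (simp add: g_minus_def mon_adj_def adj_word_def fun_eq_iff)
  show ?thesis
    unfolding comm_def gp gm wmul_mon_comb[OF ok assms ok assms]
    by (simp add: fun_eq_iff algebra_simps)
qed

lemma wdeg_g_plus_g_minus:
  assumes w: "gens_below n w" and "fst (mdeg w) \<noteq> snd (mdeg w)"
  shows "wdeg n (g_plus w) = real (length w)" "wdeg n (g_minus w) = real (length w)"
proof -
  let ?w' = "adj_word w"
  have w': "gens_below n ?w'" by (rule gens_below_adj_word[OF w])
  have top': "mon ?w' (mdeg w) = 0"
  proof (rule ccontr)
    assume "mon ?w' (mdeg w) \<noteq> 0"
    moreover have "mdeg w \<noteq> mdeg ?w'" using assms(2) by (auto simp: mdeg_adj_word prod_eq_iff)
    ultimately have "mlen n (mdeg w) + 2 \<le> length ?w'" using mon_lower[OF w'] by blast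
    thus False using mlen_mdeg[OF w] by simp
  qed
  have deg: "wdeg n (\<lambda>\<gamma>. c' * mon ?w' \<gamma> + c * mon w \<gamma>) = real (length w)" if "c \<noteq> 0" for c c'
  proof -
    have "wsupp (\<lambda>\<gamma>. c' * mon ?w' \<gamma> + c * mon w \<gamma>) \<subseteq> wsupp (mon ?w') \<union> wsupp (mon w)"
      by (auto simp: wsupp_def)
    hence "finite (wsupp (\<lambda>\<gamma>. c' * mon ?w' \<gamma> + c * mon w \<gamma>))"
      by (rule finite_subset) (simp add: finite_wsupp_mon[OF w] finite_wsupp_mon[OF w'])
    hence "wdeg n (\<lambda>\<gamma>. c' * mon ?w' \<gamma> + c * mon w \<gamma>) = real (mlen n (mdeg w))"
    proof (rule wdeg_eqI)
      show "mlen n \<gamma> \<le> mlen n (mdeg w)" if "c' * mon ?w' \<gamma> + c * mon w \<gamma> \<noteq> 0" for \<gamma>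
      proof -
        from that have "mon ?w' \<gamma> \<noteq> 0 \<or> mon w \<gamma> \<noteq> 0" by auto
        thus ?thesis
          using mon_nonzero_mlen[of ?w' \<gamma> n] mon_nonzero_mlen[of w \<gamma> n] mlen_mdeg[OF w] by auto
      qed
    qed (use that mon_mdeg[OF w] top' in simp)
    thus ?thesis by (simp add: mlen_mdeg[OF w])
  qed
  have "g_plus w = (\<lambda>\<gamma>. \<i> * mon ?w' \<gamma> + \<i> * mon w \<gamma>)"
    by (simp add: g_plus_def mon_adj_def adj_word_def fun_eq_iff algebra_simps)
  thus "wdeg n (g_plus w) = real (length w)" using deg by simp
  have "g_minus w = (\<lambda>\<gamma>. 1 * mon ?w' \<gamma> + (- 1) * mon w \<gamma>)"
    by (simp add: g_minus_def mon_adj_def adj_word_def fun_eq_iff)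
  thus "wdeg n (g_minus w) = real (length w)" using deg[of "- 1" 1] by simp
qed

lemma mon_commutator_adj_word_lower:
  assumes w: "gens_below n w" and "mdeg w = (\<alpha>, \<beta>)"
    and "(mon (w @ adj_word w) - mon (adj_word w @ w)
          - (\<Sum>k<n. wsmult (of_nat (\<beta> k * \<beta> k) - of_nat (\<alpha> k * \<alpha> k))
               (basis (dec_idx (\<lambda>j. \<alpha> j + \<beta> j, \<lambda>j. \<alpha> j + \<beta> j) k)))) \<gamma> \<noteq> 0"
  shows "mlen n \<gamma> + 4 \<le> 2 * length w"
proof -
  let ?w' = "adj_word w"
  have "count_list w (Cre j) = \<alpha> j" "count_list w (Ann j) = \<beta> j" for j
    using assms(2) by (auto simp: mdeg_def fun_eq_iff)
  hence counts: "count_list w (Ann k) * count_list ?w' (Cre k) = \<beta> k * \<beta> k"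
    "count_list w (Cre k) * count_list ?w' (Ann k) = \<alpha> k * \<alpha> k"
    "mdeg (w @ ?w') = (\<lambda>j. \<alpha> j + \<beta> j, \<lambda>j. \<alpha> j + \<beta> j)" for k
    by (simp_all add: count_list_adj_word mdeg_def add.commute)
  have "mlen n \<gamma> + 4 \<le> length w + length ?w'"
    using mon_commutator_lower[OF w gens_below_adj_word[OF w], of \<gamma>] assms(3) by (simp only: counts simp_thms)
  thus ?thesis by simp
qed

lemma mlen_dec_idx_diag:
  assumes "k < n" "s k \<ge> 1"
  shows "mlen n (dec_idx (s, s) k) + 2 = mlen n (s, s)"
proof -
  have "dec_idx (s, s) k = (s(k := s k - 1), s(k := s k - 1))" by (auto simp: dec_idx_def fun_eq_iff)
  hence "mlen n (dec_idx (s, s) k) + s k = mlen n (s, s(k := s k - 1)) + (s k - 1)"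
    using mlen_upd_fst[of n s k "s k - 1" "s(k := s k - 1)"] assms(1) by simp
  moreover have "mlen n (s, s(k := s k - 1)) + s k = mlen n (s, s) + (s k - 1)"
    using mlen_upd_snd[of n s s k "s k - 1"] assms(1) by simp
  ultimately show ?thesis using assms(2) by linarith
qed

lemma sum_basis_dec_idx_apply:
  "(\<Sum>k<n. wsmult (c k) (basis (dec_idx \<gamma> k))) \<delta> = (\<Sum>k<n. if \<delta> = dec_idx \<gamma> k then c k else 0)"
  by (simp add: sum_fun_apply basis_apply if_distrib cong: if_cong)

lemma sum_basis_dec_idx_nonzero:
  assumes "(\<Sum>k<n. wsmult (c k) (basis (dec_idx \<gamma> k))) \<delta> \<noteq> 0"
  shows "\<exists>k<n. c k \<noteq> 0 \<and> \<delta> = dec_idx \<gamma> k"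
proof -
  obtain k where "k \<in> {..<n}" "(if \<delta> = dec_idx \<gamma> k then c k else 0) \<noteq> 0"
    using sum.not_neutral_contains_not_neutral[OF assms[unfolded sum_basis_dec_idx_apply]] by blast
  thus ?thesis by (auto split: if_splits)
qed

lemma wsupp_sum_basis_dec_idx:
  "wsupp (\<Sum>k<n. wsmult (c k) (basis (dec_idx \<gamma> k))) \<subseteq> dec_idx \<gamma> ` {..<n}"
proof
  fix \<delta> assume "\<delta> \<in> wsupp (\<Sum>k<n. wsmult (c k) (basis (dec_idx \<gamma> k)))"
  with sum_basis_dec_idx_nonzero[where n = n and c = c and \<gamma> = \<gamma> and \<delta> = \<delta>]
  obtain k where "k < n" "\<delta> = dec_idx \<gamma> k" by (auto simp: wsupp_def)
  thus "\<delta> \<in> dec_idx \<gamma> ` {..<n}" by simp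
qed

lemma sum_basis_dec_idx_diag:
  assumes "k\<^sub>0 < n" and pos: "\<And>k. c k \<noteq> 0 \<Longrightarrow> s k \<ge> 1"
  shows "(\<Sum>k<n. wsmult (c k) (basis (dec_idx (s, s) k))) (dec_idx (s, s) k\<^sub>0) = c k\<^sub>0"
proof -
  have "(\<Sum>k<n. wsmult (c k) (basis (dec_idx (s, s) k))) (dec_idx (s, s) k\<^sub>0)
      = (\<Sum>k<n. if k = k\<^sub>0 then c k\<^sub>0 else 0)"
    unfolding sum_basis_dec_idx_apply
  proof (intro sum.cong refl)
    fix k
    show "(if dec_idx (s, s) k\<^sub>0 = dec_idx (s, s) k then c k else 0) = (if k = k\<^sub>0 then c k\<^sub>0 else 0)"
    proof (cases "k = k\<^sub>0 \<or> c k = 0")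
      case False
      hence "fst (dec_idx (s, s) k\<^sub>0) k \<noteq> fst (dec_idx (s, s) k) k" using pos[of k] by (auto simp: dec_idx_def)
      thus ?thesis using False by auto
    qed auto
  qed
  thus ?thesis using assms(1) by simp
qed

lemma wdeg_leading_dec_idx:
  fixes n :: nat and s :: "nat \<Rightarrow> nat" and c :: "nat \<Rightarrow> complex" and Z :: weyl
  defines "T \<equiv> \<Sum>k<n. wsmult (c k) (basis (dec_idx (s, s) k))"
  assumes fin: "finite (wsupp Z)" and lower: "\<And>\<gamma>. (Z - T) \<gamma> \<noteq> 0 \<Longrightarrow> mlen n \<gamma> + 4 \<le> mlen n (s, s)"
    and pos: "\<And>k. c k \<noteq> 0 \<Longrightarrow> s k \<ge> 1" and "k\<^sub>0 < n" "c k\<^sub>0 \<noteq> 0"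
  shows "wdeg n Z = real (mlen n (s, s)) - 2" "wdeg n (Z - T) < real (mlen n (s, s)) - 2"
proof -
  let ?d = "dec_idx (s, s)"
  have T_nonzero: "\<exists>k<n. c k \<noteq> 0 \<and> \<gamma> = ?d k" if "T \<gamma> \<noteq> 0" for \<gamma>
    using sum_basis_dec_idx_nonzero that by (simp add: T_def)
  have mlen\<^sub>0: "mlen n (?d k\<^sub>0) + 2 = mlen n (s, s)"
    by (rule mlen_dec_idx_diag) (use pos assms(5,6) in auto)
  have "(Z - T) (?d k\<^sub>0) = 0"
  proof (rule ccontr)
    assume "(Z - T) (?d k\<^sub>0) \<noteq> 0"
    from lower[OF this] mlen\<^sub>0 show False by simp
  qed
  hence "Z (?d k\<^sub>0) = c k\<^sub>0" using sum_basis_dec_idx_diag[of k\<^sub>0 n c s] pos assms(5) by (simp add: T_def)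
  hence "wdeg n Z = real (mlen n (?d k\<^sub>0))"
  proof (intro wdeg_eqI[OF fin])
    show "mlen n \<gamma> \<le> mlen n (?d k\<^sub>0)" if "Z \<gamma> \<noteq> 0" for \<gamma>
    proof (cases "T \<gamma> = 0")
      case True thus ?thesis using that lower[of \<gamma>] mlen\<^sub>0 by simp
    next
      case False
      then obtain k where "k < n" "c k \<noteq> 0" "\<gamma> = ?d k" using T_nonzero by blast
      thus ?thesis using mlen_dec_idx_diag[of k n s] pos mlen\<^sub>0 by simp
    qed
  qed (use \<open>c k\<^sub>0 \<noteq> 0\<close> in simp)
  thus "wdeg n Z = real (mlen n (s, s)) - 2" using mlen\<^sub>0 by simp
  have "finite (wsupp T)" unfolding T_def by (rule finite_subset[OF wsupp_sum_basis_dec_idx]) simp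
  moreover have "wsupp (Z - T) \<subseteq> wsupp Z \<union> wsupp T" by (auto simp: wsupp_def)
  ultimately have "finite (wsupp (Z - T))" using fin by (meson finite_Un finite_subset)
  thus "wdeg n (Z - T) < real (mlen n (s, s)) - 2"
  proof (rule wdeg_less)
    fix \<gamma> assume "(Z - T) \<gamma> \<noteq> 0"
    from of_nat_mono[OF lower[OF this], where 'a = real]
    show "real (mlen n \<gamma>) < real (mlen n (s, s)) - 2" by simp
  qed
qed

lemma wdeg_comm_g_plus_g_minus:
  assumes w: "gens_below n w" and mdeg: "mdeg w = (\<alpha>, \<beta>)" and "\<alpha> \<noteq> \<beta>"
  shows "wdeg n (comm n (g_plus w) (g_minus w)) = 2 * real (length w) - 2"
    and "wdeg n (comm n (g_plus w) (g_minus w)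
          + (\<Sum>k<n. (\<lambda>\<gamma>. 2 * \<i> * (of_nat ((\<alpha> k)\<^sup>2) - of_nat ((\<beta> k)\<^sup>2))
              * basis (\<lambda>j. \<alpha> j + \<beta> j - (if j = k then 1 else 0),
                       \<lambda>j. \<alpha> j + \<beta> j - (if j = k then 1 else 0)) \<gamma>)))
        < 2 * real (length w) - 2" (is "wdeg n (_ + ?S) < _")
proof -
  let ?w' = "adj_word w" and ?s = "\<lambda>j. \<alpha> j + \<beta> j"
  let ?Z = "mon (w @ ?w') - mon (?w' @ w)"
  let ?c = "\<lambda>k. of_nat (\<beta> k * \<beta> k) - of_nat (\<alpha> k * \<alpha> k) :: complex"
  let ?T = "\<Sum>k<n. wsmult (?c k) (basis (dec_idx (?s, ?s) k))"
  obtain k\<^sub>0 where k\<^sub>0: "\<alpha> k\<^sub>0 \<noteq> \<beta> k\<^sub>0" using assms(3) by auto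
  have "k\<^sub>0 < n" using idx_below_mdeg[OF w] k\<^sub>0 mdeg by (auto simp: idx_below_def not_less[symmetric])
  have c: "?c k \<noteq> 0 \<longleftrightarrow> \<alpha> k \<noteq> \<beta> k" for k
    using power2_eq_iff_nonneg[of "\<beta> k" "\<alpha> k"]
    by (simp only: of_nat_eq_iff right_minus_eq power2_eq_square) auto
  have "mlen n (?s, ?s) = 2 * length w"
    using mlen_mdeg[OF w] mdeg by (simp add: mlen_def sum.distrib)
  moreover have "finite (wsupp ?Z)"
    using finite_wsupp_mon[of n "w @ ?w'"] finite_wsupp_mon[of n "?w' @ w"] w gens_below_adj_word[OF w]
    by (auto intro: finite_subset[of _ "wsupp (mon (w @ ?w')) \<union> wsupp (mon (?w' @ w))"] simp: wsupp_def)
  ultimately have deg: "wdeg n ?Z = 2 * real (length w) - 2" "wdeg n (?Z - ?T) < 2 * real (length w) - 2"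
    using wdeg_leading_dec_idx[where n = n and Z = ?Z and s = ?s and c = ?c and k\<^sub>0 = k\<^sub>0]
      mon_commutator_adj_word_lower[OF w mdeg] c k\<^sub>0 \<open>k\<^sub>0 < n\<close>
    by auto
  have comm: "comm n (g_plus w) (g_minus w) = wsmult (2 * \<i>) ?Z" by (rule comm_g_plus_g_minus[OF w])
  thus "wdeg n (comm n (g_plus w) (g_minus w)) = 2 * real (length w) - 2"
    using deg(1) by (simp add: wdeg_wsmult)
  have "?S = wsmult (- 2 * \<i>) ?T"
    by (simp add: fun_eq_iff sum_fun_apply sum_distrib_left dec_idx_def power2_eq_square algebra_simps)
  hence "comm n (g_plus w) (g_minus w) + ?S = wsmult (2 * \<i>) (?Z - ?T)"
    by (simp add: comm fun_eq_iff algebra_simps)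
  thus "wdeg n (comm n (g_plus w) (g_minus w) + ?S) < 2 * real (length w) - 2"
    using deg(2) by (simp add: wdeg_wsmult)
qed

lemma g_plus_g_minus_commute_iff:
  assumes w: "gens_below n w" and mdeg: "mdeg w = (\<alpha>, \<beta>)"
  shows "wmul n (g_plus w) (g_minus w) = wmul n (g_minus w) (g_plus w) \<longleftrightarrow> \<alpha> = \<beta>"
proof (cases "\<alpha> = \<beta>")
  case True
  hence "charge_free w" "charge_free (adj_word w)"
    using mdeg by (auto simp: charge_free_def mdeg_def count_list_adj_word fun_eq_iff)
  hence "comm n (g_plus w) (g_minus w) = 0"
    using mon_append_commute_if_charge_free[OF w gens_below_adj_word[OF w]]
    by (simp add: comm_g_plus_g_minus[OF w] wsmult_def fun_eq_iff)
  with True show ?thesis by (simp add: comm_def)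
next
  case False
  hence "comm n (g_plus w) (g_minus w) \<noteq> 0"
    using wdeg_comm_g_plus_g_minus(1)[OF w mdeg False] by (auto simp: wdeg_def)
  with False show ?thesis by (simp add: comm_def)
qed

theorem lemma8:
  fixes n :: nat and w :: "gen list" and \<alpha> \<beta> :: "nat \<Rightarrow> nat"
  assumes "n \<ge> 1"
    and "\<forall>x\<in>set w. gidx x < n"
    and "mdeg w = (\<alpha>, \<beta>)"
  shows "(wmul n (g_plus w) (g_minus w) = wmul n (g_minus w) (g_plus w) \<longleftrightarrow> \<alpha> = \<beta>)
    \<and> (wmul n (g_plus w) (g_minus w) \<noteq> wmul n (g_minus w) (g_plus w) \<longrightarrow>
         wdeg n (comm n (g_plus w) (g_minus w))
           = wdeg n (g_plus w) + wdeg n (g_minus w) - 2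
       \<and> wdeg n (comm n (g_plus w) (g_minus w)
             + (\<Sum>k<n. (\<lambda>\<gamma>. 2 * \<i> * (of_nat ((\<alpha> k)\<^sup>2) - of_nat ((\<beta> k)\<^sup>2))
                   * basis (\<lambda>j. \<alpha> j + \<beta> j - (if j = k then 1 else 0),
                            \<lambda>j. \<alpha> j + \<beta> j - (if j = k then 1 else 0)) \<gamma>)))
           < wdeg n (g_plus w) + wdeg n (g_minus w) - 2)"
proof -
  have w: "gens_below n w" using assms(2) by (simp add: gens_below_def)
  have "wdeg n (g_plus w) + wdeg n (g_minus w) - 2 = 2 * real (length w) - 2" if "\<alpha> \<noteq> \<beta>"
    using wdeg_g_plus_g_minus[OF w] assms(3) that by simp
  thus ?thesis
    using g_plus_g_minus_commute_iff[OF w assms(3)] wdeg_comm_g_plus_g_minus[OF w assms(3)] by auto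
qed

end
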